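(* Let $G=(V,E)$ be a finite, simple, connected graph with $\kappa(x,y)\geq K>0$ for all $x\sim y$, and suppose $\operatorname{diam}_{\operatorname{eff}}(G)=\frac{\max_v\operatorname{Deg}(v)}{K}$. Let $x\in V$. Then \[ \Delta d(x,\cdot)=\operatorname{Deg}(x)-K\,d(x,\cdot). \] Moreover, $\operatorname{Deg}(v)=\max_w\operatorname{Deg}(w)$ for all $v\in V$, and $\kappa(u,v)=K$ for all edges $u\sim v$.
   Context: $d$ is the combinatorial distance, $\operatorname{Deg}$ the degree, $\operatorname{diam}_{\operatorname{eff}}(G)=\frac{1}{|V|^2}\sum_{x,y}d(x,y)$. Laplacian $\Delta f(x)=\sum_{y\sim x}(f(y)-f(x))$. Ollivier curvature of an edge: $\kappa(x,y)=\inf\{\Delta f(x)-\Delta f(y): f(y)-f(x)=1,\ \max_{u\sim v}|f(u)-f(v)|=1\}$. *)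

theory Defs
  imports "HOL-Analysis.Analysis"
begin

definition simple_graph :: "'a set \<Rightarrow> ('a \<Rightarrow> 'a \<Rightarrow> bool) \<Rightarrow> bool" where
  "simple_graph V E \<longleftrightarrow> finite V \<and> V \<noteq> {} \<and>
     (\<forall>u v. E u v \<longrightarrow> u \<in> V \<and> v \<in> V) \<and>
     (\<forall>u v. E u v \<longrightarrow> E v u) \<and> (\<forall>u. \<not> E u u)"

text \<open>A walk of length n from x to y: a vertex list p of length n+1.\<close>
definition is_walk :: "('a \<Rightarrow> 'a \<Rightarrow> bool) \<Rightarrow> 'a list \<Rightarrow> 'a \<Rightarrow> 'a \<Rightarrow> bool" where
  "is_walk E p x y \<longleftrightarrow> p \<noteq> [] \<and> hd p = x \<and> last p = y \<and>
     (\<forall>i. Suc i < length p \<longrightarrow> E (p ! i) (p ! Suc i))"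

definition connected_graph :: "'a set \<Rightarrow> ('a \<Rightarrow> 'a \<Rightarrow> bool) \<Rightarrow> bool" where
  "connected_graph V E \<longleftrightarrow> (\<forall>x\<in>V. \<forall>y\<in>V. \<exists>p. is_walk E p x y)"

definition gdist :: "('a \<Rightarrow> 'a \<Rightarrow> bool) \<Rightarrow> 'a \<Rightarrow> 'a \<Rightarrow> nat" where
  "gdist E x y = (LEAST n. \<exists>p. is_walk E p x y \<and> length p = Suc n)"

definition Deg :: "'a set \<Rightarrow> ('a \<Rightarrow> 'a \<Rightarrow> bool) \<Rightarrow> 'a \<Rightarrow> nat" where
  "Deg V E x = card {y\<in>V. E x y}"

definition maxDeg :: "'a set \<Rightarrow> ('a \<Rightarrow> 'a \<Rightarrow> bool) \<Rightarrow> nat" where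
  "maxDeg V E = Max (Deg V E ` V)"

definition diam_eff :: "'a set \<Rightarrow> ('a \<Rightarrow> 'a \<Rightarrow> bool) \<Rightarrow> real" where
  "diam_eff V E = (1 / real (card V) ^ 2) * (\<Sum>x\<in>V. \<Sum>y\<in>V. real (gdist E x y))"

definition laplacian :: "'a set \<Rightarrow> ('a \<Rightarrow> 'a \<Rightarrow> bool) \<Rightarrow> ('a \<Rightarrow> real) \<Rightarrow> 'a \<Rightarrow> real" where
  "laplacian V E f x = (\<Sum>y\<in>{y\<in>V. E x y}. f y - f x)"

text \<open>Ollivier curvature via the Lipschitz/Laplacian formula.\<close>
definition ollivier :: "'a set \<Rightarrow> ('a \<Rightarrow> 'a \<Rightarrow> bool) \<Rightarrow> 'a \<Rightarrow> 'a \<Rightarrow> real" where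
  "ollivier V E x y = Inf {laplacian V E f x - laplacian V E f y | f.
      f y - f x = 1 \<and> Max {\<bar>f u - f v\<bar> | u v. E u v} = 1}"

end

theory Submission
  imports Defs
begin

text \<open>The key estimate is \<open>\<Delta>d(x,\<cdot>) \<le> Deg(x) - K d(x,\<cdot>)\<close>: it holds at \<open>x\<close>, and it propagates
  outwards along shortest paths because on an edge \<open>y \<sim> z\<close> with \<open>d(x,z) = d(x,y) + 1\<close> the
  1-Lipschitz function \<open>d(x,\<cdot>)\<close> is a competitor in the infimum defining \<open>\<kappa>(y,z) \<ge> K\<close>.
  Since the Laplacian sums to zero over \<open>V\<close>, summing the estimate over \<open>z\<close> gives
  \<open>K \<Sum>\<^sub>z d(x,z) \<le> |V| Deg(x) \<le> |V| max Deg\<close>, and summing over \<open>x\<close> gives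
  \<open>diam_eff \<le> max Deg / K\<close>. Equality therefore makes every inequality in this chain tight,
  which yields the Laplacian identity and regularity; testing \<open>\<kappa>(u,v)\<close> with \<open>d(u,\<cdot>)\<close> then
  gives \<open>\<kappa>(u,v) \<le> K\<close>.\<close>

lemma is_walk_snoc:
  assumes "is_walk E p x y" and "E y w"
  shows "is_walk E (p @ [w]) x w"
proof -
  have "p \<noteq> []" and "last p = y" using assms(1) unfolding is_walk_def by blast+
  then have last: "p ! (length p - 1) = y" by (simp add: last_conv_nth)
  have "E ((p @ [w]) ! i) ((p @ [w]) ! Suc i)" if "Suc i < length (p @ [w])" for i
  proof (cases "Suc i < length p")
    case True
    then show ?thesis using assms(1) unfolding is_walk_def by (simp add: nth_append)
  next
    case False
    then have "i = length p - 1" using that by simp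
    then show ?thesis using last assms(2) \<open>p \<noteq> []\<close> by (simp add: nth_append)
  qed
  then show ?thesis using assms(1) \<open>p \<noteq> []\<close> unfolding is_walk_def by simp
qed

lemma is_walk_take:
  assumes "is_walk E p x z" and "0 < n" and "n \<le> length p"
  shows "is_walk E (take n p) x (p ! (n - 1))"
  using assms unfolding is_walk_def by (auto simp: last_conv_nth hd_conv_nth)

lemma gdist_le_walk_length:
  assumes "is_walk E p x y"
  shows "gdist E x y \<le> length p - 1"
proof -
  have "p \<noteq> []" using assms unfolding is_walk_def by blast
  then have "\<exists>q. is_walk E q x y \<and> length q = Suc (length p - 1)" using assms by auto
  then show ?thesis unfolding gdist_def by (rule Least_le)
qed

lemma gdist_refl: "gdist E x x = 0"
proof -
  have "is_walk E [x] x x" unfolding is_walk_def by auto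
  from gdist_le_walk_length[OF this] show ?thesis by simp
qed

locale finite_simple_graph =
  fixes V :: "'a set" and E :: "'a \<Rightarrow> 'a \<Rightarrow> bool"
  assumes simple: "simple_graph V E"
begin

lemma finite_V: "finite V"
  using simple unfolding simple_graph_def by blast

lemma edge_sym: "E u v \<Longrightarrow> E v u"
  using simple unfolding simple_graph_def by blast

lemma edge_irrefl: "\<not> E u u"
  using simple unfolding simple_graph_def by blast

lemma edge_in_V:
  assumes "E u v"
  shows "u \<in> V" "v \<in> V"
  using simple assms unfolding simple_graph_def by blast+

lemma laplacian_sum_eq_0: "(\<Sum>z\<in>V. laplacian V E f z) = 0"
proof -
  have "(\<Sum>z\<in>V. laplacian V E f z) = (\<Sum>z\<in>V. \<Sum>w\<in>V. if E z w then f w - f z else 0)"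
    unfolding laplacian_def using finite_V by (simp add: sum.inter_filter)
  also have "\<dots> = (\<Sum>z\<in>V. \<Sum>w\<in>V. if E z w then f w else 0)
                - (\<Sum>z\<in>V. \<Sum>w\<in>V. if E z w then f z else 0)"
    by (simp add: sum_subtractf[symmetric] if_distrib cong: if_cong)
  also have "(\<Sum>z\<in>V. \<Sum>w\<in>V. if E z w then f z else 0)
           = (\<Sum>w\<in>V. \<Sum>z\<in>V. if E z w then f z else 0)"
    by (rule sum.swap)
  also have "\<dots> = (\<Sum>z\<in>V. \<Sum>w\<in>V. if E z w then f w else 0)"
    using edge_sym by (intro sum.cong refl) metis
  finally show ?thesis by simp
qed

lemma finite_edge_differences: "finite {\<bar>f a - f b\<bar> | a b. E a b}"
proof -
  have "{\<bar>f a - f b\<bar> | a b. E a b} \<subseteq> (\<lambda>(a, b). \<bar>f a - f b\<bar>) ` (V \<times> V)"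
    using edge_in_V by fastforce
  then show ?thesis using finite_subset finite_V by blast
qed

lemma ollivier_bdd_below:
  "bdd_below {laplacian V E f u - laplacian V E f v | f.
      f v - f u = 1 \<and> Max {\<bar>f a - f b\<bar> | a b. E a b} = 1}"
proof (rule bdd_belowI)
  fix s
  assume "s \<in> {laplacian V E f u - laplacian V E f v | f.
      f v - f u = 1 \<and> Max {\<bar>f a - f b\<bar> | a b. E a b} = 1}"
  then obtain g where s: "s = laplacian V E g u - laplacian V E g v"
    and max: "Max {\<bar>g a - g b\<bar> | a b. E a b} = 1" by blast
  have lip: "\<bar>g a - g b\<bar> \<le> 1" if "E a b" for a b
  proof -
    have "\<bar>g a - g b\<bar> \<in> {\<bar>g a - g b\<bar> | a b. E a b}" using that by blast
    from Max_ge[OF finite_edge_differences this] show ?thesis using max by simp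
  qed
  have "(\<Sum>y\<in>{y\<in>V. E u y}. -1) \<le> laplacian V E g u"
    unfolding laplacian_def by (rule sum_mono) (use lip in force)
  moreover have "laplacian V E g v \<le> (\<Sum>y\<in>{y\<in>V. E v y}. 1)"
    unfolding laplacian_def by (rule sum_mono) (use lip in force)
  ultimately show "- real (card {y\<in>V. E u y}) - real (card {y\<in>V. E v y}) \<le> s"
    using s by simp
qed

lemma ollivier_le_laplacian_diff:
  assumes "E u v" and lip: "\<And>a b. E a b \<Longrightarrow> \<bar>f a - f b\<bar> \<le> 1" and "f v - f u = 1"
  shows "ollivier V E u v \<le> laplacian V E f u - laplacian V E f v"
  unfolding ollivier_def
proof (rule cInf_lower[OF _ ollivier_bdd_below])
  have "1 = \<bar>f u - f v\<bar>" using assms(3) by arith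
  then have "Max {\<bar>f a - f b\<bar> | a b. E a b} = 1"
    using assms(1) lip by (intro Max_eqI[OF finite_edge_differences]) auto
  then show "laplacian V E f u - laplacian V E f v \<in> {laplacian V E f u - laplacian V E f v | f.
      f v - f u = 1 \<and> Max {\<bar>f a - f b\<bar> | a b. E a b} = 1}"
    using assms(3) by blast
qed

lemma Deg_le_maxDeg: "v \<in> V \<Longrightarrow> Deg V E v \<le> maxDeg V E"
  unfolding maxDeg_def using finite_V by simp

end

locale connected_simple_graph = finite_simple_graph +
  assumes connected: "connected_graph V E"
begin

lemma shortest_walk_exists:
  assumes "x \<in> V" "y \<in> V"
  obtains p where "is_walk E p x y" "length p = Suc (gdist E x y)"
proof -
  obtain p where p: "is_walk E p x y"
    using connected assms unfolding connected_graph_def by blast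
  then have "p \<noteq> []" unfolding is_walk_def by blast
  with p have "\<exists>n p. is_walk E p x y \<and> length p = Suc n"
    by (metis Suc_pred length_greater_0_conv)
  from LeastI_ex[OF this] show ?thesis using that unfolding gdist_def by blast
qed

lemma gdist_eq_0_iff:
  assumes "x \<in> V" "z \<in> V"
  shows "gdist E x z = 0 \<longleftrightarrow> x = z"
proof
  assume "gdist E x z = 0"
  then obtain p where p: "is_walk E p x z" "length p = 1"
    using shortest_walk_exists[OF assms] by (metis One_nat_def)
  then obtain a where "p = [a]" by (cases p) auto
  with p(1) show "x = z" unfolding is_walk_def by auto
qed (simp add: gdist_refl)

lemma gdist_edge_le:
  assumes "x \<in> V" "y \<in> V" "E y w"
  shows "gdist E x w \<le> gdist E x y + 1"
proof -
  obtain p where "is_walk E p x y" "length p = Suc (gdist E x y)"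
    using shortest_walk_exists[OF assms(1,2)] .
  with gdist_le_walk_length[OF is_walk_snoc[of E p x y w]] show ?thesis
    using assms(3) by simp
qed

lemma gdist_edge:
  assumes "E x w"
  shows "gdist E x w = 1"
proof -
  have "x \<noteq> w" using assms edge_irrefl by blast
  then show ?thesis
    using gdist_edge_le[of x x w] gdist_eq_0_iff[of x w] edge_in_V[OF assms] assms
    by (simp add: gdist_refl)
qed

lemma gdist_lipschitz:
  assumes "x \<in> V" "E a b"
  shows "\<bar>real (gdist E x a) - real (gdist E x b)\<bar> \<le> 1"
  using gdist_edge_le[OF assms(1) edge_in_V(1)[OF assms(2)] assms(2)]
    gdist_edge_le[OF assms(1) edge_in_V(2)[OF assms(2)] edge_sym[OF assms(2)]]
  by linarith

lemma gdist_predecessor: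
  assumes "x \<in> V" "z \<in> V" "gdist E x z = Suc n"
  obtains y where "E y z" "gdist E x y = n"
proof -
  obtain p where p: "is_walk E p x z" "length p = Suc (Suc n)"
    using shortest_walk_exists[OF assms(1,2)] assms(3) by metis
  define y where "y = p ! n"
  have "p ! Suc n = z"
    using p unfolding is_walk_def by (metis last_conv_nth diff_Suc_1)
  with p have "E y z" unfolding is_walk_def y_def by auto
  have "gdist E x y \<le> n"
    using gdist_le_walk_length[OF is_walk_take[OF p(1), of "Suc n"]] p(2) y_def by simp
  moreover have "gdist E x z \<le> gdist E x y + 1"
    using gdist_edge_le[OF assms(1) edge_in_V(1)[OF \<open>E y z\<close>] \<open>E y z\<close>] .
  ultimately show ?thesis using that \<open>E y z\<close> assms(3) by simp
qed

lemma laplacian_gdist_centre: "laplacian V E (\<lambda>w. real (gdist E x w)) x = real (Deg V E x)"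
  unfolding laplacian_def Deg_def by (simp add: gdist_edge gdist_refl)

lemma laplacian_gdist_le:
  assumes "x \<in> V" and curv: "\<forall>u v. E u v \<longrightarrow> ollivier V E u v \<ge> K" and "z \<in> V"
  shows "laplacian V E (\<lambda>w. real (gdist E x w)) z \<le> real (Deg V E x) - K * real (gdist E x z)"
  using \<open>z \<in> V\<close>
proof (induction "gdist E x z" arbitrary: z)
  case 0
  then show ?case
    using gdist_eq_0_iff[OF \<open>x \<in> V\<close>] laplacian_gdist_centre by (simp add: gdist_refl)
next
  case (Suc n)
  obtain y where y: "E y z" "gdist E x y = n"
    using gdist_predecessor[OF \<open>x \<in> V\<close> Suc.prems Suc.hyps(2)[symmetric]] .
  have "K \<le> ollivier V E y z" using curv y(1) by blast
  also have "\<dots> \<le> laplacian V E (\<lambda>w. real (gdist E x w)) y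
                  - laplacian V E (\<lambda>w. real (gdist E x w)) z"
    using y Suc.hyps(2) gdist_lipschitz[OF \<open>x \<in> V\<close>]
    by (intro ollivier_le_laplacian_diff) auto
  finally show ?case
    using Suc.hyps(1)[OF y(2)[symmetric] edge_in_V(1)[OF y(1)]] y(2) Suc.hyps(2)[symmetric]
    by (simp add: algebra_simps)
qed

lemma gdist_sum_le:
  assumes "x \<in> V" and curv: "\<forall>u v. E u v \<longrightarrow> ollivier V E u v \<ge> K"
  shows "K * (\<Sum>z\<in>V. real (gdist E x z)) \<le> real (card V) * real (Deg V E x)"
proof -
  have "0 = (\<Sum>z\<in>V. laplacian V E (\<lambda>w. real (gdist E x w)) z)"
    by (simp add: laplacian_sum_eq_0)
  also have "\<dots> \<le> (\<Sum>z\<in>V. real (Deg V E x) - K * real (gdist E x z))"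
    by (intro sum_mono laplacian_gdist_le[OF assms])
  also have "\<dots> = real (card V) * real (Deg V E x) - K * (\<Sum>z\<in>V. real (gdist E x z))"
    by (simp add: sum_subtractf sum_distrib_left)
  finally show ?thesis by simp
qed

lemma laplacian_gdist_eq_if_gdist_sum_eq:
  assumes "x \<in> V" and curv: "\<forall>u v. E u v \<longrightarrow> ollivier V E u v \<ge> K"
    and sum_eq: "K * (\<Sum>z\<in>V. real (gdist E x z)) = real (card V) * real (Deg V E x)"
    and "z \<in> V"
  shows "laplacian V E (\<lambda>w. real (gdist E x w)) z = real (Deg V E x) - K * real (gdist E x z)"
proof (rule sum_mono_inv[OF _ _ \<open>z \<in> V\<close> finite_V])
  show "(\<Sum>z\<in>V. laplacian V E (\<lambda>w. real (gdist E x w)) z)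
      = (\<Sum>z\<in>V. real (Deg V E x) - K * real (gdist E x z))"
    using sum_eq by (simp add: laplacian_sum_eq_0 sum_subtractf sum_distrib_left)
qed (rule laplacian_gdist_le[OF assms(1,2)])

lemma rigidity_if_diam_eff_eq:
  assumes "K > 0" and curv: "\<forall>u v. E u v \<longrightarrow> ollivier V E u v \<ge> K"
    and diam: "diam_eff V E = real (maxDeg V E) / K" and "x \<in> V"
  shows "Deg V E x = maxDeg V E"
    and "K * (\<Sum>z\<in>V. real (gdist E x z)) = real (card V) * real (Deg V E x)"
proof -
  let ?n = "real (card V)" and ?D = "real (maxDeg V E)"
  let ?s = "\<lambda>a. K * (\<Sum>z\<in>V. real (gdist E a z))"
  have "?n > 0"
    using simple finite_V unfolding simple_graph_def by (simp add: card_gt_0_iff)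
  have s_le: "?s a \<le> ?n * real (Deg V E a)" if "a \<in> V" for a
    using gdist_sum_le[OF that curv] .
  have s_le_D: "?s a \<le> ?n * ?D" if "a \<in> V" for a
    using s_le[OF that] Deg_le_maxDeg[OF that]
    by (meson order_trans mult_left_mono of_nat_0_le_iff of_nat_mono)
  have "(\<Sum>a\<in>V. ?s a) = K * (\<Sum>a\<in>V. \<Sum>z\<in>V. real (gdist E a z))"
    by (simp add: sum_distrib_left)
  also have "\<dots> = K * (?n\<^sup>2 * diam_eff V E)"
    using \<open>?n > 0\<close> by (simp add: diam_eff_def)
  also have "\<dots> = (\<Sum>a\<in>V. ?n * ?D)"
    using diam \<open>K > 0\<close> by (simp add: power2_eq_square)
  finally have "?s x = ?n * ?D"
    using s_le_D by (rule sum_mono_inv[OF _ _ \<open>x \<in> V\<close> finite_V])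
  with s_le[OF \<open>x \<in> V\<close>] \<open>?n > 0\<close> have "maxDeg V E \<le> Deg V E x"
    by (metis mult_le_cancel_left_pos of_nat_le_iff)
  with Deg_le_maxDeg[OF \<open>x \<in> V\<close>] show "Deg V E x = maxDeg V E" by simp
  with \<open>?s x = ?n * ?D\<close> show "?s x = ?n * real (Deg V E x)" by simp
qed

lemma ollivier_le_if_laplacian_gdist_eq:
  assumes "E u v"
    and lap: "\<forall>z\<in>V. laplacian V E (\<lambda>w. real (gdist E u w)) z
                    = real (Deg V E u) - K * real (gdist E u z)"
  shows "ollivier V E u v \<le> K"
proof -
  have "ollivier V E u v \<le> laplacian V E (\<lambda>w. real (gdist E u w)) u
                          - laplacian V E (\<lambda>w. real (gdist E u w)) v"
    using assms(1) gdist_lipschitz[OF edge_in_V(1)[OF assms(1)]]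
    by (intro ollivier_le_laplacian_diff) (auto simp: gdist_edge gdist_refl)
  also have "\<dots> = K"
    using lap edge_in_V[OF assms(1)] by (simp add: gdist_edge[OF assms(1)] gdist_refl)
  finally show ?thesis .
qed

end

theorem lemma3p2:
  fixes V :: "'a set" and E :: "'a \<Rightarrow> 'a \<Rightarrow> bool" and K :: real and x :: 'a
  assumes "simple_graph V E" and "connected_graph V E"
    and "K > 0"
    and "\<forall>u v. E u v \<longrightarrow> ollivier V E u v \<ge> K"
    and "diam_eff V E = real (maxDeg V E) / K"
    and "x \<in> V"
  shows "(\<forall>z\<in>V. laplacian V E (\<lambda>w. real (gdist E x w)) z
                 = real (Deg V E x) - K * real (gdist E x z))
      \<and> (\<forall>v\<in>V. Deg V E v = maxDeg V E)
      \<and> (\<forall>u v. E u v \<longrightarrow> ollivier V E u v = K)"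
proof -
  interpret connected_simple_graph V E
    using assms(1,2) by unfold_locales
  note rigid = rigidity_if_diam_eff_eq[OF assms(3-5)]
  have lap: "\<forall>z\<in>V. laplacian V E (\<lambda>w. real (gdist E a w)) z
                   = real (Deg V E a) - K * real (gdist E a z)" if "a \<in> V" for a
    using laplacian_gdist_eq_if_gdist_sum_eq[OF that assms(4) rigid(2)[OF that]] by blast
  have "ollivier V E u v = K" if "E u v" for u v
    using ollivier_le_if_laplacian_gdist_eq[OF that lap[OF edge_in_V(1)[OF that]]]
      assms(4) that by (meson order_antisym)
  then show ?thesis
    using lap[OF assms(6)] rigid(1) by blast
qed

end
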